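(* Let $b\ge2$ be an integer and let $\gamma_0,\dots,\gamma_{b-1}$ be positive numbers, at least one greater than $1$ and at least one less than $1$. Let $X$ be the set of $x\in[0,1]$ such that $\sum_{n=1}^\infty\gamma_{x(1)}\gamma_{x(2)}\cdots\gamma_{x(n)}<+\infty$. Then the Hausdorff dimension (with respect to the Euclidean metric) of $X$ is $$\dim X=\min_{s\ge0}\frac{\log\left(\sum_{i=0}^{b-1}\gamma_i^{-s}\right)}{\log b}.$$
   Context: For $x\in[0,1]$, $x(j)$ is the $j$th digit of the $b$-ary expansion of $x$, where expansions with infinitely recurring digit $b-1$ are forbidden so that the expansion is unique. *)

theory Defs
  imports "HOL-Analysis.Analysis"
begin

definition hd_term :: "real \<Rightarrow> real set \<Rightarrow> real" where
  "hd_term s U = (if U = {} then 0 else if s = 0 then 1 else diameter U powr s)"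

definition hausdorff_approx :: "real \<Rightarrow> real \<Rightarrow> real set \<Rightarrow> ennreal" where
  "hausdorff_approx s \<delta> A =
     (INF U \<in> {U :: nat \<Rightarrow> real set. A \<subseteq> (\<Union>i. U i) \<and>
                 (\<forall>i. bounded (U i) \<and> diameter (U i) \<le> \<delta>)}.
        (\<Sum>i. ennreal (hd_term s (U i))))"

definition hausdorff_measure :: "real \<Rightarrow> real set \<Rightarrow> ennreal" where
  "hausdorff_measure s A = (SUP \<delta> \<in> {0<..}. hausdorff_approx s \<delta> A)"

definition hausdorff_dim :: "real set \<Rightarrow> real" where
  "hausdorff_dim A = Inf {s. 0 \<le> s \<and> hausdorff_measure s A = 0}"

text \<open>j-th digit (j \<ge> 1) of the b-ary expansion of x \<in> [0,1], the expansion not ending in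
  infinitely recurring b-1 (greedy expansion; for x = 1 all digits after the point are 0).\<close>
definition digit :: "nat \<Rightarrow> real \<Rightarrow> nat \<Rightarrow> nat" where
  "digit b x j = nat (\<lfloor>x * real b ^ j\<rfloor> mod int b)"

end

theory Submission
  imports Defs
begin

text \<open>Write w_n(x) = \<gamma>_x(1) ... \<gamma>_x(n) for the weight of the generation-n cylinder of x and
  Z(s) = \<Sum>_i \<gamma>_i^(-s); the sum of w^(-s) over all b^n cylinders of generation n is Z(s)^n.
  Let s0 minimize Z on [0,\<infinity>) and d = log Z(s0) / log b.

  Upper bound: each x in X lies in cylinders of arbitrarily high generation with weight at
  most 1, and there are at most 1 + Z(s0)^n of them in generation n; covering X by these
  cylinders shows H^t(X) = 0 for t > d.

  Lower bound: for t < d, a Chernoff estimate at a point slightly to the right of s0 provides,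
  for large m, more than 2 b^(mt) words of length m of weight at most e^(-\<beta>m) < 1.
  Infinite concatenations of such words lie in X and form a Cantor set onto which [0,1) maps
  with an inverse Hoelder estimate of exponent t, so H^t(X) > 0.\<close>

text \<open>For \<open>K = \<lfloor>x b\<^sup>n\<rfloor>\<close>, the \<open>n\<close> lowest base-\<open>b\<close> digits of \<open>K\<close> are the first \<open>n\<close> digits of \<open>x\<close>.\<close>
fun cylinder_weight :: "nat \<Rightarrow> (nat \<Rightarrow> real) \<Rightarrow> nat \<Rightarrow> nat \<Rightarrow> real" where
  "cylinder_weight b g 0 K = 1"
| "cylinder_weight b g (Suc n) K = g (K mod b) * cylinder_weight b g n (K div b)"

lemma cylinder_weight_add:
  "cylinder_weight b g (m + n) K = cylinder_weight b g m K * cylinder_weight b g n (K div b ^ m)"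
  by (induction m arbitrary: K) (simp_all add: div_mult2_eq mult.commute)

lemma cylinder_weight_mod:
  assumes "b > 0"
  shows "cylinder_weight b g m (K mod b ^ m) = cylinder_weight b g m K"
proof (induction m arbitrary: K)
  case (Suc m)
  have "K mod b ^ Suc m div b = (K div b) mod b ^ m"
    using assms by (simp add: mod_mult2_eq mult.commute)
  then show ?case using Suc by (simp add: mod_mod_cancel)
qed simp

lemma cylinder_weight_pos:
  "(\<And>i. i < b \<Longrightarrow> g i > 0) \<Longrightarrow> b > 0 \<Longrightarrow> cylinder_weight b g n K > 0"
  by (induction n arbitrary: K) auto

lemma cylinder_weight_powr:
  assumes "\<And>i. i < b \<Longrightarrow> g i > 0" "b > 0"
  shows "cylinder_weight b (\<lambda>i. g i powr e) n K = cylinder_weight b g n K powr e"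
proof (induction n arbitrary: K)
  case (Suc n)
  have "g (K mod b) > 0" "cylinder_weight b g n (K div b) > 0"
    using assms cylinder_weight_pos[of b g] by auto
  then show ?case using Suc by (simp add: powr_mult)
qed simp

lemma cylinder_weight_le_power:
  assumes "\<And>i. i < b \<Longrightarrow> 0 < g i \<and> g i \<le> G" "b > 0"
  shows "cylinder_weight b g n K \<le> G ^ n"
proof (induction n arbitrary: K)
  case (Suc n)
  have "0 < g (K mod b) \<and> g (K mod b) \<le> G"
    using assms by simp
  moreover have "0 \<le> cylinder_weight b g n (K div b)"
    using assms cylinder_weight_pos[of b g] by (simp add: less_imp_le)
  ultimately show ?case
    using Suc by (simp add: mult_mono)
qed simp

lemma sum_lessThan_mult_split:
  fixes h :: "nat \<Rightarrow> 'a::comm_monoid_add"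
  shows "(\<Sum>K<m * b. h K) = (\<Sum>q<m. \<Sum>r<b. h (q * b + r))"
proof -
  have "(\<Sum>K<m * b. h K) = (\<Sum>q<m. sum h {q * b..<q * b + b})"
    using sum.nat_group[where g=h and n=m and k=b] by simp
  also have "\<dots> = (\<Sum>q<m. \<Sum>r<b. h (q * b + r))"
  proof (rule sum.cong[OF refl])
    fix q
    show "sum h {q * b..<q * b + b} = (\<Sum>r<b. h (q * b + r))"
      using sum.shift_bounds_nat_ivl[of h 0 "q * b" b]
      by (simp add: atLeast0LessThan add.commute)
  qed
  finally show ?thesis .
qed

lemma sum_cylinder_weight:
  assumes "b > 0"
  shows "(\<Sum>K<b ^ n. cylinder_weight b g n K) = (\<Sum>i<b. g i) ^ n"
proof (induction n)
  case (Suc n)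
  have "(\<Sum>K<b ^ Suc n. cylinder_weight b g (Suc n) K)
      = (\<Sum>q<b ^ n. \<Sum>r<b. g r * cylinder_weight b g n q)"
    using assms by (simp add: sum_lessThan_mult_split power_Suc2 del: power_Suc)
  also have "\<dots> = (\<Sum>q<b ^ n. cylinder_weight b g n q) * (\<Sum>i<b. g i)"
    by (simp add: sum_distrib_left sum_distrib_right mult.commute)
  finally show ?case using Suc by simp
qed simp

lemma digit_less:
  assumes "b > 0"
  shows "digit b x j < b"
proof -
  have "\<lfloor>x * real b ^ j\<rfloor> mod int b < int b" "0 \<le> \<lfloor>x * real b ^ j\<rfloor> mod int b"
    using assms by simp_all
  then show ?thesis unfolding digit_def by (simp add: nat_less_iff)
qed

lemma floor_mult_power_add_div:
  assumes "b > 0"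
  shows "\<lfloor>x * real b ^ (k + r)\<rfloor> div int (b ^ r) = \<lfloor>x * real b ^ k\<rfloor>"
proof -
  have "\<lfloor>x * real b ^ (k + r)\<rfloor> div int (b ^ r) = \<lfloor>x * real b ^ (k + r) / real (b ^ r)\<rfloor>"
    by (metis floor_divide_real_eq_div of_int_of_nat_eq of_nat_0_le_iff)
  also have "x * real b ^ (k + r) / real (b ^ r) = x * real b ^ k"
    using assms by (simp add: power_add)
  finally show ?thesis .
qed

lemma floor_mult_power_Suc:
  assumes "b > 0"
  shows "\<lfloor>x * real b ^ Suc k\<rfloor> = int b * \<lfloor>x * real b ^ k\<rfloor> + int (digit b x (Suc k))"
proof -
  have "\<lfloor>x * real b ^ Suc k\<rfloor> div int b = \<lfloor>x * real b ^ k\<rfloor>"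
    using floor_mult_power_add_div[OF assms, of x k 1] by simp
  moreover have "\<lfloor>x * real b ^ Suc k\<rfloor> mod int b = int (digit b x (Suc k))"
    using assms by (simp add: digit_def)
  ultimately show ?thesis
    by (metis div_mult_mod_eq mult.commute)
qed

lemma prod_digit_eq_cylinder_weight:
  assumes "x \<ge> 0" "b > 0"
  shows "(\<Prod>j=1..n. g (digit b x j)) = cylinder_weight b g n (nat \<lfloor>x * real b ^ n\<rfloor>)"
proof (induction n)
  case (Suc n)
  have nonneg: "\<lfloor>x * real b ^ k\<rfloor> \<ge> 0" for k
    using assms by simp
  have "nat \<lfloor>x * real b ^ Suc n\<rfloor> mod b = digit b x (Suc n)"
    using nonneg[of "Suc n"] by (simp add: digit_def nat_mod_distrib)
  moreover have "\<lfloor>x * real b ^ Suc n\<rfloor> div int b = \<lfloor>x * real b ^ n\<rfloor>"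
    using floor_mult_power_add_div[OF assms(2), of x n 1] by simp
  then have "nat \<lfloor>x * real b ^ Suc n\<rfloor> div b = nat \<lfloor>x * real b ^ n\<rfloor>"
    using nonneg[of "Suc n"] by (metis nat_div_distrib nat_int of_nat_0_le_iff)
  ultimately show ?case using Suc by (simp add: mult.commute)
qed simp

lemma floor_mult_power_eq_if_digits_eq:
  assumes "b > 0" "0 \<le> x" "x < 1" "0 \<le> y" "y < 1"
    and "\<And>j. 1 \<le> j \<Longrightarrow> j \<le> k \<Longrightarrow> digit b x j = digit b y j"
  shows "\<lfloor>x * real b ^ k\<rfloor> = \<lfloor>y * real b ^ k\<rfloor>"
  using assms(6)
proof (induction k)
  case 0
  have "\<lfloor>x\<rfloor> = 0" "\<lfloor>y\<rfloor> = 0"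
    using assms by (simp_all add: floor_eq_iff)
  then show ?case by simp
next
  case (Suc k)
  then show ?case using floor_mult_power_Suc[OF assms(1)] by simp
qed

lemma abs_diff_less_if_floor_mult_power_eq:
  assumes "b > 0" "\<lfloor>x * real b ^ k\<rfloor> = \<lfloor>y * real b ^ k\<rfloor>"
  shows "\<bar>x - y\<bar> < 1 / real b ^ k"
proof -
  have "\<bar>x * real b ^ k - y * real b ^ k\<bar> < 1"
    using assms(2) by linarith
  then have "\<bar>x - y\<bar> * real b ^ k < 1"
    using assms(1) by (simp add: abs_mult left_diff_distrib[symmetric])
  then show ?thesis using assms(1) by (simp add: field_simps)
qed

lemma first_differing_digit:
  assumes "b \<ge> 2" "0 \<le> x" "x < 1" "0 \<le> y" "y < 1" "x \<noteq> y"
  obtains k where "\<And>j. 1 \<le> j \<Longrightarrow> j \<le> k \<Longrightarrow> digit b x j = digit b y j"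
    and "digit b x (Suc k) \<noteq> digit b y (Suc k)" and "\<bar>x - y\<bar> < 1 / real b ^ k"
proof -
  have b0: "b > 0" using assms by simp
  have "\<exists>k. digit b x (Suc k) \<noteq> digit b y (Suc k)"
  proof (rule ccontr)
    assume none: "\<nexists>k. digit b x (Suc k) \<noteq> digit b y (Suc k)"
    have "digit b x j = digit b y j" if "1 \<le> j" for j
      using that none by (cases j) auto
    then have close: "\<bar>x - y\<bar> < 1 / real b ^ k" for k
      using abs_diff_less_if_floor_mult_power_eq[OF b0 floor_mult_power_eq_if_digits_eq[OF b0 assms(2-5)]]
      by blast
    obtain k where "1 / \<bar>x - y\<bar> < real b ^ k"
      using real_arch_pow[of "real b" "1 / \<bar>x - y\<bar>"] assms(1) by auto
    moreover have "\<bar>x - y\<bar> * real b ^ k < 1"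
      using close[of k] b0 by (simp add: field_simps)
    ultimately show False
      using assms(6) by (simp add: field_simps)
  qed
  define k where "k = (LEAST k. digit b x (Suc k) \<noteq> digit b y (Suc k))"
  have differ: "digit b x (Suc k) \<noteq> digit b y (Suc k)"
    unfolding k_def by (rule LeastI_ex) fact
  have agree: "digit b x j = digit b y j" if "1 \<le> j" "j \<le> k" for j
    using not_less_Least[of "j - 1" "\<lambda>k. digit b x (Suc k) \<noteq> digit b y (Suc k)"] that
    unfolding k_def by (simp add: Suc_diff_1 Suc_le_lessD)
  have "\<bar>x - y\<bar> < 1 / real b ^ k"
    by (rule abs_diff_less_if_floor_mult_power_eq[OF b0 floor_mult_power_eq_if_digits_eq[OF b0 assms(2-5) agree]])
  with agree differ show thesis
    by (rule that)
qed

fun prefix_value :: "(nat \<Rightarrow> nat) \<Rightarrow> nat \<Rightarrow> nat \<Rightarrow> nat" where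
  "prefix_value a B 0 = 0"
| "prefix_value a B (Suc k) = B * prefix_value a B k + a k"

definition tail_value :: "(nat \<Rightarrow> nat) \<Rightarrow> nat \<Rightarrow> nat \<Rightarrow> real" where
  "tail_value a B k = (\<Sum>l. real (a (l + k)) / real B ^ Suc l)"

text \<open>Excluding the digit \<open>B - 1\<close> keeps every tail strictly below \<open>1\<close>, so the expansion
  has exactly the base-\<open>B\<close> digits \<open>a\<close>.\<close>
locale small_digits =
  fixes a :: "nat \<Rightarrow> nat" and B :: nat
  assumes base_ge_2: "B \<ge> 2" and digit_le: "\<And>l. a l \<le> B - 2"
begin

lemma tail_term_le: "real (a (l + k)) / real B ^ Suc l \<le> (real B - 2) / real B * (1 / real B) ^ l"
proof -
  have "real (a (l + k)) \<le> real B - 2"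
    using digit_le[of "l + k"] base_ge_2 by linarith
  then have "real (a (l + k)) / real B ^ Suc l \<le> (real B - 2) / real B ^ Suc l"
    using base_ge_2 by (simp add: divide_right_mono)
  also have "\<dots> = (real B - 2) / real B * (1 / real B) ^ l"
    by (simp add: power_divide field_simps)
  finally show ?thesis .
qed

lemma summable_geometric_bound: "summable (\<lambda>l. (real B - 2) / real B * (1 / real B) ^ l)"
  using base_ge_2 by (intro summable_mult summable_geometric) simp

lemma summable_tail: "summable (\<lambda>l. real (a (l + k)) / real B ^ Suc l)"
  by (rule summable_comparison_test'[OF summable_geometric_bound]) (use tail_term_le in simp)

lemma tail_value_nonneg: "0 \<le> tail_value a B k"
  unfolding tail_value_def by (rule suminf_nonneg[OF summable_tail]) simp

lemma tail_value_less_1: "tail_value a B k < 1"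
proof -
  have "tail_value a B k \<le> (\<Sum>l. (real B - 2) / real B * (1 / real B) ^ l)"
    unfolding tail_value_def
    by (rule suminf_le[OF tail_term_le summable_tail summable_geometric_bound])
  also have "\<dots> = (real B - 2) / (real B - 1)"
    using base_ge_2 by (subst suminf_mult) (simp_all add: suminf_geometric field_simps)
  also have "\<dots> < 1"
    using base_ge_2 by (simp add: field_simps)
  finally show ?thesis .
qed

lemma tail_value_Suc: "tail_value a B k = (real (a k) + tail_value a B (Suc k)) / real B"
proof -
  let ?f = "\<lambda>l. real (a (l + k)) / real B ^ Suc l"
  have "(\<Sum>n. ?f (Suc n)) = suminf ?f - ?f 0"
    by (rule suminf_split_head[OF summable_tail])
  moreover have "(\<Sum>n. ?f (Suc n)) = (\<Sum>n. real (a (n + Suc k)) / real B ^ Suc n / real B)"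
    by (simp add: field_simps)
  moreover have "\<dots> = tail_value a B (Suc k) / real B"
    unfolding tail_value_def using suminf_divide[OF summable_tail[of "Suc k"], of "real B"] by simp
  ultimately show ?thesis
    unfolding tail_value_def using base_ge_2 by (simp add: field_simps)
qed

definition expansion :: real where
  "expansion = tail_value a B 0"

lemma expansion_mult_power: "expansion * real B ^ k = real (prefix_value a B k) + tail_value a B k"
proof (induction k)
  case (Suc k)
  have "expansion * real B ^ Suc k = real B * (real (prefix_value a B k) + tail_value a B k)"
    using Suc by (simp add: mult.commute mult.left_commute)
  also have "\<dots> = real B * real (prefix_value a B k) + real (a k) + tail_value a B (Suc k)"
    using base_ge_2 by (subst tail_value_Suc) (simp add: field_simps)
  finally show ?case by simp
qed (simp add: expansion_def)

lemma floor_expansion_mult_power: "\<lfloor>expansion * real B ^ k\<rfloor> = int (prefix_value a B k)"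
  using expansion_mult_power[of k] tail_value_nonneg[of k] tail_value_less_1[of k]
  by (simp add: floor_eq_iff)

lemma expansion_range: "0 \<le> expansion" "expansion < 1"
  using expansion_mult_power[of 0] tail_value_nonneg[of 0] tail_value_less_1[of 0] by simp_all

end

lemma prefix_value_cong: "(\<And>l. l < k \<Longrightarrow> a l = a' l) \<Longrightarrow> prefix_value a B k = prefix_value a' B k"
  by (induction k) auto

lemma summable_power_div:
  fixes c :: real
  assumes "0 < c" "c < 1" "m > 0"
  shows "summable (\<lambda>n. c ^ (n div m))"
proof -
  define q where "q = root m c"
  have q0: "0 < q" and q1: "q < 1" using assms by (simp_all add: q_def)
  have qm: "q ^ m = c" using assms by (simp add: q_def real_root_pow_pos)
  have bound: "c ^ (n div m) \<le> q ^ n / c" for n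
  proof -
    have "q ^ n = q ^ (m * (n div m)) * q ^ (n mod m)"
      by (simp flip: power_add)
    then have split: "q ^ n = c ^ (n div m) * q ^ (n mod m)"
      by (simp add: power_mult qm)
    have "c \<le> q ^ (n mod m)"
      using q0 q1 assms(3) qm power_decreasing[of "n mod m" m q] by auto
    then have "c ^ (n div m) * c \<le> q ^ n"
      unfolding split using assms by (intro mult_left_mono) auto
    then show ?thesis using assms by (simp add: field_simps)
  qed
  have "summable (\<lambda>n. q ^ n / c)"
    using q0 q1 by (intro summable_divide summable_geometric) simp
  then show ?thesis
    by (rule summable_comparison_test') (use bound assms(1) in simp)
qed

definition convergence_set :: "nat \<Rightarrow> (nat \<Rightarrow> real) \<Rightarrow> real set" where
  "convergence_set b \<gamma> = {x \<in> {0..1}. summable (\<lambda>n. \<Prod>j=1..Suc n. \<gamma> (digit b x j))}"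

lemma hd_term_nonneg: "0 \<le> hd_term s U"
  by (simp add: hd_term_def diameter_ge_0)

lemma dist_powr_le_hd_term:
  assumes "bounded U" "x \<in> U" "y \<in> U" "t \<ge> 0"
  shows "\<bar>x - y\<bar> powr t \<le> hd_term t U"
proof (cases "t = 0")
  case False
  have "\<bar>x - y\<bar> \<le> diameter U"
    using diameter_bounded_bound[OF assms(1-3)] by (simp add: dist_real_def)
  then show ?thesis
    using assms False by (auto simp: hd_term_def intro: powr_mono2)
qed (use assms in \<open>auto simp: hd_term_def\<close>)

lemma one_le_suminf_if_intervals_cover:
  fixes p r :: "nat \<Rightarrow> real"
  assumes cover: "{0..<1} \<subseteq> (\<Union>i. {p i - r i .. p i + r i})" and r: "\<And>i. r i \<ge> 0"
  shows "1 \<le> (\<Sum>i. ennreal (2 * r i))"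
proof -
  have "1 = emeasure lborel {0..<(1::real)}"
    by (simp add: emeasure_lborel_Ico)
  also have "\<dots> \<le> emeasure lborel (\<Union>i. {p i - r i .. p i + r i})"
    using cover by (intro emeasure_mono) auto
  also have "\<dots> \<le> (\<Sum>i. emeasure lborel {p i - r i .. p i + r i})"
    by (intro emeasure_subadditive_countably) auto
  also have "\<dots> = (\<Sum>i. ennreal (2 * r i))"
    using r by (simp add: emeasure_lborel_Icc)
  finally show ?thesis .
qed

lemma ennreal_divide_le_if_one_le_mult:
  assumes "c > 0" "1 \<le> ennreal c * x"
  shows "ennreal (1 / c) \<le> x"
proof -
  have "ennreal (1 / c) * ennreal c = 1"
    using assms(1) by (simp flip: ennreal_mult)
  then have "ennreal (1 / c) \<le> ennreal (1 / c) * (ennreal c * x)"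
    using mult_left_mono[OF assms(2), of "ennreal (1 / c)"] by simp
  also have "\<dots> = x"
    using \<open>ennreal (1 / c) * ennreal c = 1\<close> by (simp add: mult.assoc[symmetric])
  finally show ?thesis .
qed

text \<open>A cover of \<open>A\<close> pulls back along \<open>\<psi>\<close> to a cover of \<open>[0,1)\<close> by intervals of radius
  \<open>C\<close> times the \<open>t\<close>-contributions of the covering sets.\<close>
lemma hausdorff_approx_ge_if_inverse_holder:
  fixes \<psi> :: "real \<Rightarrow> real"
  assumes into: "\<And>z. z \<in> {0..<1} \<Longrightarrow> \<psi> z \<in> A"
    and holder: "\<And>z z'. z \<in> {0..<1} \<Longrightarrow> z' \<in> {0..<1} \<Longrightarrow> \<bar>z - z'\<bar> \<le> C * \<bar>\<psi> z - \<psi> z'\<bar> powr t"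
    and C: "C > 0" and t: "t \<ge> 0"
  shows "ennreal (1 / (2 * C)) \<le> hausdorff_approx t \<delta> A"
  unfolding hausdorff_approx_def
proof (rule INF_greatest, clarify)
  fix U :: "nat \<Rightarrow> real set"
  assume cov: "A \<subseteq> (\<Union>i. U i)" and bnd: "\<forall>i. bounded (U i) \<and> diameter (U i) \<le> \<delta>"
  define h where "h i = hd_term t (U i)" for i
  have h_nonneg: "0 \<le> h i" for i
    by (simp add: h_def hd_term_nonneg)
  define V where "V i = {z \<in> {0..<1}. \<psi> z \<in> U i}" for i
  define p where "p i = (SOME z. z \<in> V i)" for i
  have in_interval: "z \<in> {p i - C * h i .. p i + C * h i}" if "z \<in> V i" for z i
  proof -
    have "p i \<in> V i"
      unfolding p_def using that by (rule someI)
    then have "\<bar>\<psi> z - \<psi> (p i)\<bar> powr t \<le> h i"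
      unfolding h_def using that bnd t by (intro dist_powr_le_hd_term) (auto simp: V_def)
    then have "C * \<bar>\<psi> z - \<psi> (p i)\<bar> powr t \<le> C * h i"
      using C by (simp add: mult_left_mono)
    moreover have "z \<in> {0..<1}" "p i \<in> {0..<1}"
      using that \<open>p i \<in> V i\<close> by (simp_all add: V_def)
    ultimately have "\<bar>z - p i\<bar> \<le> C * h i"
      using holder by force
    then show ?thesis
      by (simp add: abs_le_iff)
  qed
  have "{0..<1} \<subseteq> (\<Union>i. {p i - C * h i .. p i + C * h i})"
  proof
    fix z :: real assume "z \<in> {0..<1}"
    moreover obtain i where "\<psi> z \<in> U i"
      using into[OF \<open>z \<in> {0..<1}\<close>] cov by blast
    ultimately have "z \<in> V i"
      by (simp add: V_def)
    then show "z \<in> (\<Union>i. {p i - C * h i .. p i + C * h i})"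
      using in_interval by blast
  qed
  then have "1 \<le> (\<Sum>i. ennreal (2 * (C * h i)))"
    using C h_nonneg by (intro one_le_suminf_if_intervals_cover) auto
  also have "\<dots> = (\<Sum>i. ennreal (2 * C) * ennreal (h i))"
    using C h_nonneg by (simp add: ennreal_mult[symmetric] mult.assoc)
  also have "\<dots> = ennreal (2 * C) * (\<Sum>i. ennreal (h i))"
    by (rule ennreal_suminf_cmult)
  finally show "ennreal (1 / (2 * C)) \<le> (\<Sum>i. ennreal (hd_term t (U i)))"
    using C unfolding h_def by (intro ennreal_divide_le_if_one_le_mult) auto
qed

lemma hausdorff_measure_pos_if_inverse_holder:
  fixes \<psi> :: "real \<Rightarrow> real"
  assumes "\<And>z. z \<in> {0..<1} \<Longrightarrow> \<psi> z \<in> A"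
    and "\<And>z z'. z \<in> {0..<1} \<Longrightarrow> z' \<in> {0..<1} \<Longrightarrow> \<bar>z - z'\<bar> \<le> C * \<bar>\<psi> z - \<psi> z'\<bar> powr t"
    and "C > 0" "t \<ge> 0"
  shows "hausdorff_measure t A \<noteq> 0"
proof -
  have "ennreal (1 / (2 * C)) \<le> hausdorff_approx t 1 A"
    by (rule hausdorff_approx_ge_if_inverse_holder[OF assms])
  also have "\<dots> \<le> hausdorff_measure t A"
    unfolding hausdorff_measure_def by (rule SUP_upper) simp
  finally show ?thesis
    using \<open>C > 0\<close> by (auto simp: ennreal_eq_0_iff)
qed

text \<open>The base-\<open>N\<close> digits of \<open>z \<in> [0,1)\<close>, \<open>N = card W\<close>, select blocks of \<open>m\<close> base-\<open>b\<close> digits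
  from \<open>W\<close>. Light blocks put the image in the convergence set; blocks at distance \<open>\<ge> 2\<close>
  that avoid \<open>b\<^sup>m - 1\<close> keep images of different \<open>z\<close> apart, and \<open>N \<ge> (b\<^sup>m)\<^sup>t\<close> turns this into
  an inverse Hoelder estimate with exponent \<open>t\<close>.\<close>
locale cantor_construction =
  fixes b :: nat and \<gamma> :: "nat \<Rightarrow> real" and m :: nat and W :: "nat set" and c t :: real
  assumes base_ge_2: "b \<ge> 2" and weights_pos: "\<forall>i<b. \<gamma> i > 0" and block_len_pos: "m \<ge> 1"
    and words_le: "\<forall>K\<in>W. K \<le> b ^ m - 2"
    and words_apart: "\<forall>K\<in>W. \<forall>K'\<in>W. K \<noteq> K' \<longrightarrow> K + 2 \<le> K' \<or> K' + 2 \<le> K"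
    and words_weight_le: "\<forall>K\<in>W. cylinder_weight b \<gamma> m K \<le> c"
    and c_pos: "0 < c" and c_less_1: "c < 1"
    and card_words_ge_2: "card W \<ge> 2" and t_nonneg: "t \<ge> 0"
    and card_words_ge: "real (card W) \<ge> real (b ^ m) powr t"
begin

definition "B = b ^ m"
definition "N = card W"
definition "word e = sorted_list_of_set W ! e"
definition "coded_digits z l = word (digit N z (Suc l))"
definition "cantor_map z = tail_value (coded_digits z) B 0"

lemma b_pos: "b > 0"
  using base_ge_2 by simp

lemma cylinder_weight_nonneg: "0 \<le> cylinder_weight b \<gamma> n K"
  using cylinder_weight_pos[of b \<gamma>] weights_pos b_pos by (simp add: less_imp_le)

lemma finite_words: "finite W"
  using words_le by (meson finite_atMost finite_subset subsetI atMost_iff)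

lemma B_ge_2: "B \<ge> 2"
  using base_ge_2 block_len_pos power_increasing[of 1 m b] by (simp add: B_def)

lemma N_ge_2: "N \<ge> 2"
  using card_words_ge_2 by (simp add: N_def)

lemma N_pos: "N > 0"
  using N_ge_2 by simp

lemma word_in_words: "e < N \<Longrightarrow> word e \<in> W"
  using finite_words nth_mem[of e "sorted_list_of_set W"] by (simp add: word_def N_def)

lemma word_inj: "e < N \<Longrightarrow> e' < N \<Longrightarrow> word e = word e' \<Longrightarrow> e = e'"
  using finite_words by (simp add: word_def N_def nth_eq_iff_index_eq)

lemma coded_digits_in_words: "coded_digits z l \<in> W"
  unfolding coded_digits_def by (intro word_in_words digit_less N_pos)

lemma small_digits_coded: "small_digits (coded_digits z) B"
  using B_ge_2 words_le coded_digits_in_words by unfold_locales (auto simp: B_def)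

lemma cantor_map_eq_expansion: "cantor_map z = small_digits.expansion (coded_digits z) B"
  by (simp add: cantor_map_def small_digits.expansion_def[OF small_digits_coded])

lemma cantor_map_range: "0 \<le> cantor_map z" "cantor_map z < 1"
  using small_digits.expansion_range[OF small_digits_coded] by (simp_all add: cantor_map_eq_expansion)

lemma floor_cantor_map_mult_power: "\<lfloor>cantor_map z * real b ^ (m * k)\<rfloor> = int (prefix_value (coded_digits z) B k)"
  using small_digits.floor_expansion_mult_power[OF small_digits_coded]
  by (simp add: cantor_map_eq_expansion B_def power_mult)

lemma cylinder_weight_prefix_value_le:
  "cylinder_weight b \<gamma> (m * k) (prefix_value (coded_digits z) B k) \<le> c ^ k"
proof (induction k)
  case (Suc k)
  let ?P = "prefix_value (coded_digits z) B"
  have "coded_digits z k < B"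
    using coded_digits_in_words[of z k] words_le B_ge_2 by (auto simp: B_def)
  then have div: "?P (Suc k) div b ^ m = ?P k" and mod: "?P (Suc k) mod b ^ m = coded_digits z k"
    using b_pos by (simp_all add: B_def)
  have "cylinder_weight b \<gamma> (m * Suc k) (?P (Suc k))
      = cylinder_weight b \<gamma> m (coded_digits z k) * cylinder_weight b \<gamma> (m * k) (?P k)"
    using cylinder_weight_add[of b \<gamma> m "m * k" "?P (Suc k)"] cylinder_weight_mod[OF b_pos, of \<gamma> m "?P (Suc k)"]
    unfolding div mod by simp
  also have "\<dots> \<le> c * c ^ k"
    using Suc words_weight_le coded_digits_in_words c_pos
    by (intro mult_mono) (simp_all add: cylinder_weight_nonneg)
  finally show ?case by simp
qed simp

text \<open>Splitting the first \<open>n + 1\<close> digits into a short head and \<open>\<lfloor>(n+1)/m\<rfloor>\<close> full blocks.\<close>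
lemma prod_digits_cantor_map_le:
  defines "G \<equiv> 1 + (\<Sum>i<b. \<gamma> i)"
  shows "(\<Prod>j=1..Suc n. \<gamma> (digit b (cantor_map z) j)) \<le> G ^ m * c ^ (n div m)"
proof -
  have \<gamma>_le: "0 < \<gamma> i \<and> \<gamma> i \<le> G" if "i < b" for i
    using that weights_pos member_le_sum[of i "{..<b}" \<gamma>] by (auto simp: G_def less_imp_le)
  have "0 \<le> (\<Sum>i<b. \<gamma> i)"
    using weights_pos by (intro sum_nonneg) (simp add: less_imp_le)
  then have G_ge_1: "G \<ge> 1"
    by (simp add: G_def)
  define k where "k = Suc n div m"
  define r where "r = Suc n mod m"
  define K where "K = nat \<lfloor>cantor_map z * real b ^ Suc n\<rfloor>"
  have Suc_n: "Suc n = r + m * k"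
    by (simp add: k_def r_def)
  have "\<lfloor>cantor_map z * real b ^ Suc n\<rfloor> \<ge> 0"
    using cantor_map_range(1)[of z] by simp
  then have "K div b ^ r = nat (\<lfloor>cantor_map z * real b ^ (m * k + r)\<rfloor> div int (b ^ r))"
    unfolding K_def Suc_n by (metis add.commute nat_div_distrib of_nat_0_le_iff nat_int)
  also have "\<dots> = prefix_value (coded_digits z) B k"
    using floor_mult_power_add_div[OF b_pos] floor_cantor_map_mult_power by simp
  finally have K_div: "K div b ^ r = prefix_value (coded_digits z) B k" .
  have "(\<Prod>j=1..Suc n. \<gamma> (digit b (cantor_map z) j)) = cylinder_weight b \<gamma> (Suc n) K"
    unfolding K_def by (rule prod_digit_eq_cylinder_weight[OF cantor_map_range(1) b_pos])
  also have "\<dots> = cylinder_weight b \<gamma> r K * cylinder_weight b \<gamma> (m * k) (K div b ^ r)"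
    unfolding Suc_n by (rule cylinder_weight_add)
  finally have head_tail: "(\<Prod>j=1..Suc n. \<gamma> (digit b (cantor_map z) j))
      = cylinder_weight b \<gamma> r K * cylinder_weight b \<gamma> (m * k) (prefix_value (coded_digits z) B k)"
    unfolding K_div .
  have "cylinder_weight b \<gamma> r K \<le> G ^ r"
    using cylinder_weight_le_power[OF \<gamma>_le b_pos] .
  also have "\<dots> \<le> G ^ m"
    using G_ge_1 block_len_pos by (intro power_increasing) (auto simp: r_def less_imp_le)
  finally have head: "cylinder_weight b \<gamma> r K \<le> G ^ m" .
  have "c ^ k \<le> c ^ (n div m)"
    using c_pos c_less_1 by (intro power_decreasing) (auto simp: k_def div_le_mono)
  then have tail: "cylinder_weight b \<gamma> (m * k) (prefix_value (coded_digits z) B k) \<le> c ^ (n div m)"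
    using cylinder_weight_prefix_value_le[of k z] by linarith
  show ?thesis
    unfolding head_tail using head tail c_pos G_ge_1
    by (intro mult_mono) (simp_all add: cylinder_weight_nonneg)
qed

lemma cantor_map_in_convergence_set: "cantor_map z \<in> convergence_set b \<gamma>"
proof -
  define G where "G = 1 + (\<Sum>i<b. \<gamma> i)"
  have "summable (\<lambda>n. G ^ m * c ^ (n div m))"
    using summable_power_div[OF c_pos c_less_1] block_len_pos by (intro summable_mult) auto
  moreover have "norm (\<Prod>j=1..Suc n. \<gamma> (digit b (cantor_map z) j)) \<le> G ^ m * c ^ (n div m)" for n
  proof -
    have "0 \<le> (\<Prod>j=1..Suc n. \<gamma> (digit b (cantor_map z) j))"
      using weights_pos digit_less[OF b_pos] by (intro prod_nonneg) (simp add: less_imp_le)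
    then have "norm (\<Prod>j=1..Suc n. \<gamma> (digit b (cantor_map z) j)) = (\<Prod>j=1..Suc n. \<gamma> (digit b (cantor_map z) j))"
      unfolding real_norm_def by (rule abs_of_nonneg)
    then show ?thesis
      using prod_digits_cantor_map_le[where n=n and z=z] unfolding G_def by linarith
  qed
  ultimately have "summable (\<lambda>n. \<Prod>j=1..Suc n. \<gamma> (digit b (cantor_map z) j))"
    by (rule summable_comparison_test')
  then show ?thesis
    using cantor_map_range[of z] by (simp add: convergence_set_def)
qed

lemma cantor_map_apart:
  assumes z: "0 \<le> z" "z < 1" and z': "0 \<le> z'" "z' < 1" and "z \<noteq> z'"
  obtains k where "\<bar>z - z'\<bar> < 1 / real N ^ k" and "1 / real B ^ Suc k \<le> \<bar>cantor_map z - cantor_map z'\<bar>"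
proof -
  obtain k where agree: "\<And>j. 1 \<le> j \<Longrightarrow> j \<le> k \<Longrightarrow> digit N z j = digit N z' j"
    and differ: "digit N z (Suc k) \<noteq> digit N z' (Suc k)" and close: "\<bar>z - z'\<bar> < 1 / real N ^ k"
    by (rule first_differing_digit[OF N_ge_2 z z' \<open>z \<noteq> z'\<close>]) blast
  let ?a = "coded_digits z" and ?a' = "coded_digits z'"
  have same_prefix: "prefix_value ?a B k = prefix_value ?a' B k"
    by (rule prefix_value_cong) (simp add: coded_digits_def agree)
  have "?a k \<noteq> ?a' k"
    unfolding coded_digits_def using word_inj[OF digit_less[OF N_pos] digit_less[OF N_pos]] differ by blast
  then have "?a k + 2 \<le> ?a' k \<or> ?a' k + 2 \<le> ?a k"
    using words_apart coded_digits_in_words[of z k] coded_digits_in_words[of z' k] by blast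
  then have gap: "\<bar>real (?a k) - real (?a' k)\<bar> \<ge> 2"
    by linarith
  have tails: "0 \<le> tail_value ?a B (Suc k)" "tail_value ?a B (Suc k) < 1"
    "0 \<le> tail_value ?a' B (Suc k)" "tail_value ?a' B (Suc k) < 1"
    by (simp_all add: small_digits.tail_value_nonneg[OF small_digits_coded]
        small_digits.tail_value_less_1[OF small_digits_coded])
  have "real B ^ Suc k > 0"
    using B_ge_2 by simp
  then have "\<bar>cantor_map z - cantor_map z'\<bar> * real B ^ Suc k
      = \<bar>cantor_map z * real B ^ Suc k - cantor_map z' * real B ^ Suc k\<bar>"
    by (simp add: abs_mult left_diff_distrib[symmetric])
  also have "\<dots> = \<bar>(real (?a k) - real (?a' k)) + (tail_value ?a B (Suc k) - tail_value ?a' B (Suc k))\<bar>"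
    unfolding cantor_map_eq_expansion small_digits.expansion_mult_power[OF small_digits_coded]
    using same_prefix by simp
  also have "\<dots> \<ge> 1"
    using gap tails by linarith
  finally have "1 / real B ^ Suc k \<le> \<bar>cantor_map z - cantor_map z'\<bar>"
    using B_ge_2 by (simp add: field_simps)
  with close show thesis
    by (rule that)
qed

lemma dist_le_cantor_map_dist_powr:
  assumes "z \<in> {0..<1}" "z' \<in> {0..<1}"
  shows "\<bar>z - z'\<bar> \<le> real B powr t * \<bar>cantor_map z - cantor_map z'\<bar> powr t"
proof (cases "z = z'")
  case False
  obtain k where close: "\<bar>z - z'\<bar> < 1 / real N ^ k"
    and apart: "1 / real B ^ Suc k \<le> \<bar>cantor_map z - cantor_map z'\<bar>"
    using cantor_map_apart assms False by auto
  have B_pos: "real B > 0"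
    using B_ge_2 by simp
  have "1 / real N ^ k \<le> 1 / (real B powr t) ^ k"
    using card_words_ge B_pos N_pos
    by (intro divide_left_mono power_mono) (simp_all add: B_def N_def)
  also have "\<dots> = real B powr t * (1 / real B ^ Suc k) powr t"
  proof -
    have "(real B powr t) ^ k = real B powr (t * k)"
      using B_pos by (simp add: powr_realpow[symmetric] powr_powr mult.commute)
    moreover have "(1 / real B ^ Suc k) powr t = real B powr (- (t * Suc k))"
    proof -
      have "1 / real B ^ Suc k = real B powr (- real (Suc k))"
        using B_pos by (subst powr_minus_divide, subst powr_realpow) auto
      then show ?thesis by (simp add: powr_powr algebra_simps)
    qed
    ultimately show ?thesis
      using B_pos by (simp add: powr_add[symmetric] powr_minus_divide algebra_simps)
  qed
  also have "\<dots> \<le> real B powr t * \<bar>cantor_map z - cantor_map z'\<bar> powr t"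
    using apart t_nonneg B_pos by (simp add: mult_left_mono powr_mono2)
  finally show ?thesis
    using close by linarith
qed simp

lemma hausdorff_measure_pos: "hausdorff_measure t (convergence_set b \<gamma>) \<noteq> 0"
proof (rule hausdorff_measure_pos_if_inverse_holder)
  show "cantor_map z \<in> convergence_set b \<gamma>" for z
    by (rule cantor_map_in_convergence_set)
  show "\<bar>z - z'\<bar> \<le> real B powr t * \<bar>cantor_map z - cantor_map z'\<bar> powr t"
    if "z \<in> {0..<1}" "z' \<in> {0..<1}" for z z'
    using that by (rule dist_le_cantor_map_dist_powr)
qed (use B_ge_2 t_nonneg in auto)

end

definition partition_sum :: "(nat \<Rightarrow> real) \<Rightarrow> nat \<Rightarrow> real \<Rightarrow> real" where
  "partition_sum \<gamma> b s = (\<Sum>i<b. exp (- s * ln (\<gamma> i)))"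

definition log_partition_deriv :: "(nat \<Rightarrow> real) \<Rightarrow> nat \<Rightarrow> real \<Rightarrow> real" where
  "log_partition_deriv \<gamma> b s = (\<Sum>i<b. - ln (\<gamma> i) * exp (- s * ln (\<gamma> i))) / partition_sum \<gamma> b s"

lemma partition_sum_pos: "b > 0 \<Longrightarrow> partition_sum \<gamma> b s > 0"
  unfolding partition_sum_def by (intro sum_pos) auto

lemma partition_sum_eq_powr: "\<forall>i<b. \<gamma> i > 0 \<Longrightarrow> partition_sum \<gamma> b s = (\<Sum>i<b. \<gamma> i powr (- s))"
  unfolding partition_sum_def powr_def by (intro sum.cong) auto

lemma has_real_derivative_ln_partition_sum:
  assumes "b > 0"
  shows "((\<lambda>s. ln (partition_sum \<gamma> b s)) has_real_derivative log_partition_deriv \<gamma> b s) (at s)"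
proof -
  have "((\<lambda>s. partition_sum \<gamma> b s) has_real_derivative
      (\<Sum>i<b. - ln (\<gamma> i) * exp (- s * ln (\<gamma> i)))) (at s)"
    unfolding partition_sum_def
  proof (rule DERIV_sum)
    show "((\<lambda>x. exp (- x * ln (\<gamma> i))) has_real_derivative - ln (\<gamma> i) * exp (- s * ln (\<gamma> i))) (at s)" for i
      by (rule derivative_eq_intros refl | simp)+
  qed
  from DERIV_chain2[OF DERIV_ln[OF partition_sum_pos[OF assms]] this] show ?thesis
    by (simp add: log_partition_deriv_def divide_inverse mult.commute)
qed

lemma isCont_log_partition_deriv: "b > 0 \<Longrightarrow> isCont (log_partition_deriv \<gamma> b) x"
  unfolding log_partition_deriv_def
  using partition_sum_pos[of b \<gamma> x] by (intro continuous_intros) (auto simp: partition_sum_def)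

lemma ln_partition_sum_ge:
  assumes "i < b"
  shows "ln (partition_sum \<gamma> b s) \<ge> - s * ln (\<gamma> i)"
proof -
  have "exp (- s * ln (\<gamma> i)) \<le> partition_sum \<gamma> b s"
    unfolding partition_sum_def using assms by (intro member_le_sum) auto
  then show ?thesis
    by (metis exp_gt_zero ln_exp ln_mono)
qed

lemma continuous_has_largest_minimizer:
  fixes \<phi> :: "real \<Rightarrow> real"
  assumes cont: "continuous_on {0..} \<phi>" and "S \<ge> 0" and large: "\<And>s. s > S \<Longrightarrow> \<phi> s > \<phi> 0"
  obtains s0 where "s0 \<ge> 0" "\<And>s. s \<ge> 0 \<Longrightarrow> \<phi> s0 \<le> \<phi> s" "\<And>s. s > s0 \<Longrightarrow> \<phi> s0 < \<phi> s"
proof -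
  have cont_S: "continuous_on {0..S} \<phi>"
    using cont by (rule continuous_on_subset) auto
  obtain x0 where x0: "x0 \<in> {0..S}" "\<And>y. y \<in> {0..S} \<Longrightarrow> \<phi> x0 \<le> \<phi> y"
    using continuous_attains_inf[OF compact_Icc _ cont_S] \<open>S \<ge> 0\<close> by auto
  define Z where "Z = {s \<in> {0..S}. \<phi> s = \<phi> x0}"
  have "closed Z"
    unfolding Z_def by (rule continuous_closed_preimage_constant[OF cont_S]) simp
  moreover have "bounded Z"
    unfolding Z_def by (rule bounded_subset[of "{0..S}"]) auto
  ultimately have "compact Z"
    by (simp add: compact_eq_bounded_closed)
  moreover have "x0 \<in> Z"
    using x0 by (simp add: Z_def)
  ultimately obtain s0 where s0: "s0 \<in> Z" "\<And>y. y \<in> Z \<Longrightarrow> y \<le> s0"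
    using compact_attains_sup[of Z] by blast
  have "\<phi> x0 \<le> \<phi> 0"
    using x0(2)[of 0] \<open>S \<ge> 0\<close> by simp
  have min: "\<phi> s0 \<le> \<phi> s" if "s \<ge> 0" for s
  proof (cases "s \<le> S")
    case True
    then show ?thesis using s0(1) x0(2) that by (auto simp: Z_def)
  next
    case False
    then show ?thesis using s0(1) \<open>\<phi> x0 \<le> \<phi> 0\<close> large[of s] \<open>S \<ge> 0\<close> by (auto simp: Z_def)
  qed
  moreover have "\<phi> s0 < \<phi> s" if "s > s0" for s
  proof (cases "s \<le> S")
    case True
    have "s \<notin> Z"
      using s0(2)[of s] that by auto
    with True show ?thesis
      using min[of s] that s0(1) by (auto simp: Z_def)
  next
    case False
    then show ?thesis using s0(1) \<open>\<phi> x0 \<le> \<phi> 0\<close> large[of s] \<open>S \<ge> 0\<close> by (auto simp: Z_def)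
  qed
  ultimately show thesis
    using that s0(1) by (auto simp: Z_def)
qed

lemma ln_partition_sum_largest_minimizer:
  assumes "b \<ge> 2" "\<exists>i<b. \<gamma> i < 1" "\<forall>i<b. \<gamma> i > 0"
  obtains s0 where "s0 \<ge> 0"
    "\<And>s. s \<ge> 0 \<Longrightarrow> ln (partition_sum \<gamma> b s0) \<le> ln (partition_sum \<gamma> b s)"
    "\<And>s. s > s0 \<Longrightarrow> ln (partition_sum \<gamma> b s0) < ln (partition_sum \<gamma> b s)"
proof -
  obtain i where i: "i < b" "\<gamma> i < 1"
    using assms(2) by blast
  then have ln_\<gamma>: "- ln (\<gamma> i) > 0"
    using assms(3) by simp
  show thesis
  proof (rule continuous_has_largest_minimizer)
  show "continuous_on {0..} (\<lambda>s. ln (partition_sum \<gamma> b s))"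
    using assms(1) by (intro continuous_at_imp_continuous_on ballI
        DERIV_isCont[OF has_real_derivative_ln_partition_sum]) auto
  show "ln b / - ln (\<gamma> i) \<ge> 0"
    using assms(1) ln_\<gamma> by (intro divide_nonneg_pos) auto
  fix s assume "s > ln b / - ln (\<gamma> i)"
  then have "ln b < s * - ln (\<gamma> i)"
    using ln_\<gamma> by (simp add: field_simps)
  then show "ln (partition_sum \<gamma> b s) > ln (partition_sum \<gamma> b 0)"
    using ln_partition_sum_ge[OF i(1), where \<gamma>=\<gamma> and s=s] by (simp add: partition_sum_def)
  qed (use that in auto)
qed

lemma increment_less_if_deriv_less:
  fixes \<phi> g :: "real \<Rightarrow> real"
  assumes "\<And>x. (\<phi> has_real_derivative g x) (at x)" and "\<mu> > 0" and "\<And>x. s < x \<Longrightarrow> x < s + \<mu> \<Longrightarrow> g x < A"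
  shows "\<phi> (s + \<mu>) - \<phi> s < \<mu> * A"
proof -
  obtain \<zeta> where "s < \<zeta>" "\<zeta> < s + \<mu>" "\<phi> (s + \<mu>) - \<phi> s = (s + \<mu> - s) * g \<zeta>"
    using MVT2[of s "s + \<mu>" \<phi> g] assms(1,2) by auto
  then show ?thesis
    using assms(2,3) by simp
qed

lemma mult_deriv_eq_0_at_minimizer:
  fixes \<phi> g :: "real \<Rightarrow> real"
  assumes deriv: "\<And>x. (\<phi> has_real_derivative g x) (at x)"
    and "s0 \<ge> 0" and min: "\<And>s. s \<ge> 0 \<Longrightarrow> \<phi> s0 \<le> \<phi> s"
  shows "s0 * g s0 = 0"
proof (cases "s0 = 0")
  case False
  then have "g s0 = 0"
    using DERIV_local_min[OF deriv, of s0 s0] min \<open>s0 \<ge> 0\<close> by force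
  then show ?thesis by simp
qed simp

text \<open>Near the largest minimizer \<open>s0\<close> of a \<open>C\<^sup>1\<close> function \<open>\<phi>\<close> we find a point \<open>s\<close> where \<open>\<phi>\<close>
  strictly increases to the left, grows with slope below \<open>A\<close> to the right, and
  \<open>\<phi> s - s A\<close> is still close to \<open>\<phi> s0\<close>; the last point uses \<open>s0 \<phi>'(s0) = 0\<close>.\<close>
lemma near_minimizer_slopes:
  fixes \<phi> g :: "real \<Rightarrow> real"
  assumes deriv: "\<And>x. (\<phi> has_real_derivative g x) (at x)" and cont: "\<And>x. isCont g x"
    and "s0 \<ge> 0" and min: "\<And>s. s \<ge> 0 \<Longrightarrow> \<phi> s0 \<le> \<phi> s" and strict: "\<And>s. s > s0 \<Longrightarrow> \<phi> s0 < \<phi> s"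
    and "L < \<phi> s0"
  obtains s \<kappa> \<mu> \<beta> A where "s \<ge> 0" "\<kappa> > 0" "\<mu> > 0" "\<beta> > 0"
    "\<phi> s - \<phi> (s - \<kappa>) > \<kappa> * \<beta>" "\<phi> (s + \<mu>) - \<phi> s < \<mu> * A" "\<phi> s - s * A > L"
proof -
  define \<epsilon> where "\<epsilon> = \<phi> s0 - L"
  define \<eta> where "\<eta> = \<epsilon> / (4 * (s0 + 1))"
  define A where "A = \<bar>g s0\<bar> + \<eta>"
  have \<epsilon>: "\<epsilon> > 0" and \<eta>: "\<eta> > 0" and A: "A > 0"
    using \<open>L < \<phi> s0\<close> \<open>s0 \<ge> 0\<close> by (simp_all add: \<epsilon>_def \<eta>_def A_def add_nonneg_pos)
  obtain \<delta> where \<delta>: "\<delta> > 0" "\<And>x. \<bar>x - s0\<bar> < \<delta> \<Longrightarrow> \<bar>g x - g s0\<bar> < \<eta>"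
    using cont[of s0] \<eta> unfolding continuous_at_eps_delta dist_real_def by blast
  define h where "h = min (\<delta> / 2) (\<epsilon> / (4 * A))"
  have "h \<le> \<delta> / 2" "h \<le> \<epsilon> / (4 * A)"
    unfolding h_def by linarith+
  moreover from this(2) have "h * A \<le> \<epsilon> / 4"
    using A by (simp add: field_simps)
  moreover have "h > 0"
    using \<delta> \<epsilon> A by (simp add: h_def)
  ultimately have h: "h > 0" "h \<le> \<delta> / 2" "h * A \<le> \<epsilon> / 4"
    by blast+
  define s where "s = s0 + h"
  define \<beta> where "\<beta> = (\<phi> s - \<phi> s0) / (2 * h)"
  have "\<phi> s0 < \<phi> s"
    using strict h by (simp add: s_def)
  then have \<beta>: "\<beta> > 0" and left: "\<phi> s - \<phi> (s - h) > h * \<beta>"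
    using h by (simp_all add: \<beta>_def s_def field_simps)
  have "g x < A" if "s < x" "x < s + h / 2" for x
    using that h \<delta>(2)[of x] by (force simp: s_def A_def)
  then have right: "\<phi> (s + h / 2) - \<phi> s < h / 2 * A"
    using h by (intro increment_less_if_deriv_less[OF deriv]) auto
  have "s * A = s0 * \<eta> + h * A"
    using mult_deriv_eq_0_at_minimizer[OF deriv \<open>s0 \<ge> 0\<close> min]
    by (simp add: s_def A_def algebra_simps abs_mult[symmetric])
  moreover have "s0 * \<eta> \<le> \<epsilon> / 4"
    using \<open>s0 \<ge> 0\<close> \<epsilon> by (simp add: \<eta>_def field_simps)
  moreover have "\<phi> s0 \<le> \<phi> s"
    using min h \<open>s0 \<ge> 0\<close> by (simp add: s_def)
  ultimately have "\<phi> s - s * A > L"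
    using h(3) \<epsilon> unfolding \<epsilon>_def by argo
  with left right \<beta> h show thesis
    using that[of s h "h / 2" \<beta> A] \<open>s0 \<ge> 0\<close> by (simp add: s_def)
qed

lemma sum_cylinder_weight_powr:
  assumes "b > 0" "\<forall>i<b. \<gamma> i > 0"
  shows "(\<Sum>K<b ^ m. cylinder_weight b \<gamma> m K powr e) = partition_sum \<gamma> b (- e) ^ m"
proof -
  have "(\<Sum>K<b ^ m. cylinder_weight b \<gamma> m K powr e) = (\<Sum>K<b ^ m. cylinder_weight b (\<lambda>i. \<gamma> i powr e) m K)"
    using cylinder_weight_powr[of b \<gamma> e m] assms by simp
  also have "\<dots> = (\<Sum>i<b. \<gamma> i powr e) ^ m"
    by (rule sum_cylinder_weight[OF assms(1)])
  finally show ?thesis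
    using partition_sum_eq_powr[OF assms(2)] by simp
qed

lemma powr_le_chernoff_split:
  fixes w s a c \<kappa> \<mu> :: real
  assumes "w > 0" "s \<ge> 0" "a > 0" "c > 0" "\<kappa> \<ge> 0" "\<mu> \<ge> 0"
  shows "w powr (- s) \<le> (if a \<le> w \<and> w \<le> c then a powr (- s) else 0)
      + c powr (- \<kappa>) * w powr (\<kappa> - s) + a powr \<mu> * w powr (- s - \<mu>)"
proof -
  have nonneg: "0 \<le> c powr (- \<kappa>) * w powr (\<kappa> - s)" "0 \<le> a powr \<mu> * w powr (- s - \<mu>)"
    "0 \<le> (if a \<le> w \<and> w \<le> c then a powr (- s) else 0)"
    by simp_all
  consider "a \<le> w \<and> w \<le> c" | "w > c" | "w < a"
    by linarith
  then show ?thesis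
  proof cases
    case 1
    then have "w powr (- s) \<le> a powr (- s)"
      using assms by (intro powr_mono2') auto
    moreover have "(if a \<le> w \<and> w \<le> c then a powr (- s) else 0) = a powr (- s)"
      using 1 by simp
    ultimately show ?thesis
      using nonneg by linarith
  next
    case 2
    then have "0 \<le> \<kappa> * (ln w - ln c)"
      using assms by simp
    then have "w powr (- s) \<le> c powr (- \<kappa>) * w powr (\<kappa> - s)"
      using assms by (simp add: powr_def exp_add[symmetric] algebra_simps)
    then show ?thesis
      using nonneg by linarith
  next
    case 3
    then have "0 \<le> \<mu> * (ln a - ln w)"
      using assms by simp
    then have "w powr (- s) \<le> a powr \<mu> * w powr (- s - \<mu>)"
      using assms by (simp add: powr_def exp_add[symmetric] algebra_simps)
    then show ?thesis
      using nonneg by linarith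
  qed
qed

text \<open>Chernoff-type estimate: weights above \<open>c\<close> or below \<open>a\<close> contribute little to the
  partition sum, being dominated by the partition sums at \<open>s - \<kappa>\<close> and \<open>s + \<mu>\<close>.\<close>
lemma partition_sum_power_le_count:
  assumes "b > 0" "\<forall>i<b. \<gamma> i > 0" "s \<ge> 0" "a > 0" "c > 0" "\<kappa> \<ge> 0" "\<mu> \<ge> 0"
  shows "partition_sum \<gamma> b s ^ m
    \<le> real (card {K \<in> {..<b ^ m}. a \<le> cylinder_weight b \<gamma> m K \<and> cylinder_weight b \<gamma> m K \<le> c}) * a powr (- s)
      + c powr (- \<kappa>) * partition_sum \<gamma> b (s - \<kappa>) ^ m + a powr \<mu> * partition_sum \<gamma> b (s + \<mu>) ^ m"
proof -
  let ?w = "cylinder_weight b \<gamma> m"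
  let ?P = "\<lambda>K. a \<le> ?w K \<and> ?w K \<le> c"
  have "partition_sum \<gamma> b s ^ m = (\<Sum>K<b ^ m. ?w K powr (- s))"
    using sum_cylinder_weight_powr[OF assms(1,2), of m "- s"] by simp
  also have "\<dots> \<le> (\<Sum>K<b ^ m. (if ?P K then a powr (- s) else 0)
      + c powr (- \<kappa>) * ?w K powr (\<kappa> - s) + a powr \<mu> * ?w K powr (- s - \<mu>))"
    using assms cylinder_weight_pos[of b \<gamma>] by (intro sum_mono powr_le_chernoff_split) auto
  also have "\<dots> = (\<Sum>K<b ^ m. (if ?P K then a powr (- s) else 0))
      + c powr (- \<kappa>) * (\<Sum>K<b ^ m. ?w K powr (\<kappa> - s))
      + a powr \<mu> * (\<Sum>K<b ^ m. ?w K powr (- s - \<mu>))"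
    by (simp add: sum.distrib sum_distrib_left)
  also have "(\<Sum>K<b ^ m. (if ?P K then a powr (- s) else 0)) = real (card {K \<in> {..<b ^ m}. ?P K}) * a powr (- s)"
    by (simp add: sum.inter_filter[symmetric])
  also have "(\<Sum>K<b ^ m. ?w K powr (\<kappa> - s)) = partition_sum \<gamma> b (s - \<kappa>) ^ m"
    using sum_cylinder_weight_powr[OF assms(1,2), of m "\<kappa> - s"] by simp
  also have "(\<Sum>K<b ^ m. ?w K powr (- s - \<mu>)) = partition_sum \<gamma> b (s + \<mu>) ^ m"
    using sum_cylinder_weight_powr[OF assms(1,2), of m "- s - \<mu>"] by (simp add: algebra_simps)
  finally show ?thesis .
qed

lemma exp_power_powr: "(exp x ^ m) powr y = exp (x * y) ^ m" for x y :: real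
proof -
  have "exp x ^ m = exp (real m * x)"
    by (simp add: exp_of_nat_mult)
  then show ?thesis
    by (simp add: powr_def exp_of_nat_mult[symmetric] algebra_simps)
qed

lemma card_light_words_ge:
  fixes \<beta> A :: real
  assumes "b > 0" "\<forall>i<b. \<gamma> i > 0" "s \<ge> 0" "\<kappa> > 0" "\<mu> > 0"
  defines "r\<^sub>1 \<equiv> exp (\<beta> * \<kappa>) * partition_sum \<gamma> b (s - \<kappa>) / partition_sum \<gamma> b s"
    and "r\<^sub>2 \<equiv> exp (- A * \<mu>) * partition_sum \<gamma> b (s + \<mu>) / partition_sum \<gamma> b s"
  shows "(1 - r\<^sub>1 ^ m - r\<^sub>2 ^ m) * (exp (- A * s) * partition_sum \<gamma> b s) ^ m
    \<le> real (card {K \<in> {..<b ^ m}. exp (- A) ^ m \<le> cylinder_weight b \<gamma> m K \<and> cylinder_weight b \<gamma> m K \<le> exp (- \<beta>) ^ m})"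
    (is "_ \<le> real (card ?W)")
proof -
  define Z where "Z = partition_sum \<gamma> b s"
  have Z: "Z > 0"
    unfolding Z_def by (rule partition_sum_pos[OF assms(1)])
  have "Z ^ m \<le> real (card ?W) * (exp (- A) ^ m) powr (- s)
      + (exp (- \<beta>) ^ m) powr (- \<kappa>) * partition_sum \<gamma> b (s - \<kappa>) ^ m
      + (exp (- A) ^ m) powr \<mu> * partition_sum \<gamma> b (s + \<mu>) ^ m"
    unfolding Z_def using assms by (intro partition_sum_power_le_count) auto
  also have "\<dots> = real (card ?W) * exp (A * s) ^ m + r\<^sub>1 ^ m * Z ^ m + r\<^sub>2 ^ m * Z ^ m"
  proof -
    have "(exp (- \<beta>) ^ m) powr (- \<kappa>) * partition_sum \<gamma> b (s - \<kappa>) ^ m = r\<^sub>1 ^ m * Z ^ m"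
      unfolding r\<^sub>1_def Z_def using Z by (simp add: Z_def exp_power_powr power_mult_distrib power_divide)
    moreover have "(exp (- A) ^ m) powr \<mu> * partition_sum \<gamma> b (s + \<mu>) ^ m = r\<^sub>2 ^ m * Z ^ m"
      unfolding r\<^sub>2_def Z_def using Z by (simp add: Z_def exp_power_powr power_mult_distrib power_divide)
    ultimately show ?thesis
      by (simp add: exp_power_powr)
  qed
  finally have "(1 - r\<^sub>1 ^ m - r\<^sub>2 ^ m) * Z ^ m \<le> real (card ?W) * exp (A * s) ^ m"
    by (simp add: algebra_simps)
  then have "(1 - r\<^sub>1 ^ m - r\<^sub>2 ^ m) * Z ^ m * exp (- A * s) ^ m
      \<le> real (card ?W) * (exp (A * s) ^ m * exp (- A * s) ^ m)"
    by (simp add: mult_right_mono mult.assoc)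
  also have "exp (A * s) ^ m * exp (- A * s) ^ m = 1"
    by (simp add: power_mult_distrib[symmetric] exp_add[symmetric])
  finally show ?thesis
    by (simp add: Z_def power_mult_distrib mult_ac)
qed

lemma less_mult_exp_if_ln_less: "0 < x \<Longrightarrow> 0 < y \<Longrightarrow> ln x < ln y + c \<Longrightarrow> x < y * exp c"
  for x y c :: real
  by (metis exp_add exp_less_mono exp_ln mult.commute)

lemma exists_power_small_and_large:
  fixes r\<^sub>1 r\<^sub>2 q :: real
  assumes "0 < r\<^sub>1" "r\<^sub>1 < 1" "0 < r\<^sub>2" "r\<^sub>2 < 1" "q > 1"
  obtains m where "m \<ge> 1" "r\<^sub>1 ^ m + r\<^sub>2 ^ m \<le> 1 / 2" "q ^ m \<ge> 12"
proof -
  obtain N where N: "12 < q ^ N"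
    using real_arch_pow[of q 12] assms(5) by auto
  have "\<forall>\<^sub>F m in sequentially. q ^ m \<ge> 12"
    unfolding eventually_sequentially
    using N assms(5) by (metis less_le_trans power_increasing less_imp_le)
  moreover have "\<forall>\<^sub>F m in sequentially. r\<^sub>1 ^ m < 1 / 4"
    using LIMSEQ_power_zero[of r\<^sub>1] assms(1,2) by (intro order_tendstoD) auto
  moreover have "\<forall>\<^sub>F m in sequentially. r\<^sub>2 ^ m < 1 / 4"
    using LIMSEQ_power_zero[of r\<^sub>2] assms(3,4) by (intro order_tendstoD) auto
  moreover have "\<forall>\<^sub>F m in sequentially. m \<ge> 1"
    by (rule eventually_ge_at_top)
  ultimately have "\<forall>\<^sub>F m in sequentially. m \<ge> 1 \<and> r\<^sub>1 ^ m + r\<^sub>2 ^ m \<le> 1 / 2 \<and> q ^ m \<ge> 12"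
    by eventually_elim auto
  then show thesis
    using that eventually_happens[of _ sequentially] by auto
qed

lemma exists_light_words:
  assumes b: "b \<ge> 2" and pos: "\<forall>i<b. \<gamma> i > 0" and "t \<ge> 0" "s \<ge> 0" "\<kappa> > 0" "\<mu> > 0" "\<beta> > 0"
    and left: "ln (partition_sum \<gamma> b s) - ln (partition_sum \<gamma> b (s - \<kappa>)) > \<kappa> * \<beta>"
    and right: "ln (partition_sum \<gamma> b (s + \<mu>)) - ln (partition_sum \<gamma> b s) < \<mu> * A"
    and large: "ln (partition_sum \<gamma> b s) - s * A > t * ln b"
  obtains m W where "m \<ge> 1" "W \<subseteq> {..<b ^ m}" "\<forall>K\<in>W. cylinder_weight b \<gamma> m K \<le> exp (- \<beta>) ^ m"
    "real (card W) \<ge> 2 * real (b ^ m) powr t + 4"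
proof -
  have b0: "b > 0" using b by simp
  define Z where "Z s = partition_sum \<gamma> b s" for s
  have Z: "Z x > 0" for x
    unfolding Z_def by (rule partition_sum_pos[OF b0])
  define r\<^sub>1 where "r\<^sub>1 = exp (\<beta> * \<kappa>) * Z (s - \<kappa>) / Z s"
  define r\<^sub>2 where "r\<^sub>2 = exp (- A * \<mu>) * Z (s + \<mu>) / Z s"
  define P where "P = real b powr t"
  define q where "q = exp (- A * s) * Z s / P"
  have P: "P \<ge> 1"
    using b \<open>t \<ge> 0\<close> by (simp add: P_def ge_one_powr_ge_zero)
  have "Z (s - \<kappa>) < Z s * exp (- (\<beta> * \<kappa>))"
    using left Z by (intro less_mult_exp_if_ln_less) (simp_all add: Z_def algebra_simps)
  then have r\<^sub>1: "0 < r\<^sub>1" "r\<^sub>1 < 1"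
    using Z[of s] Z[of "s - \<kappa>"] by (simp_all add: r\<^sub>1_def field_simps exp_minus)
  have "Z (s + \<mu>) < Z s * exp (A * \<mu>)"
    using right Z by (intro less_mult_exp_if_ln_less) (simp_all add: Z_def algebra_simps)
  then have r\<^sub>2: "0 < r\<^sub>2" "r\<^sub>2 < 1"
    using Z[of s] Z[of "s + \<mu>"] by (simp_all add: r\<^sub>2_def field_simps exp_minus)
  have "P < Z s * exp (- (A * s))"
    using large Z P b0 by (intro less_mult_exp_if_ln_less) (simp_all add: Z_def P_def algebra_simps)
  then have q: "q > 1"
    using P by (simp add: q_def field_simps)
  obtain m where m: "m \<ge> 1" "r\<^sub>1 ^ m + r\<^sub>2 ^ m \<le> 1 / 2" "q ^ m \<ge> 12"
    using exists_power_small_and_large[OF r\<^sub>1 r\<^sub>2 q] .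
  define W where "W = {K \<in> {..<b ^ m}. exp (- A) ^ m \<le> cylinder_weight b \<gamma> m K \<and> cylinder_weight b \<gamma> m K \<le> exp (- \<beta>) ^ m}"
  have "(1 - r\<^sub>1 ^ m - r\<^sub>2 ^ m) * (exp (- A * s) * Z s) ^ m \<le> real (card W)"
    unfolding W_def r\<^sub>1_def r\<^sub>2_def Z_def using assms by (intro card_light_words_ge) auto
  also have "exp (- A * s) * Z s = q * P"
    using P by (simp add: q_def)
  finally have card_ge: "(1 - r\<^sub>1 ^ m - r\<^sub>2 ^ m) * q ^ m * P ^ m \<le> real (card W)"
    by (simp add: power_mult_distrib mult.assoc)
  have "1 / 2 * 12 \<le> (1 - r\<^sub>1 ^ m - r\<^sub>2 ^ m) * q ^ m"
    using m by (intro mult_mono) auto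
  moreover have "P ^ m \<ge> 1"
    using P by simp
  ultimately have "6 * P ^ m \<le> (1 - r\<^sub>1 ^ m - r\<^sub>2 ^ m) * q ^ m * P ^ m"
    by (intro mult_right_mono) auto
  moreover have "real (b ^ m) powr t = P ^ m"
    unfolding P_def using b0 by (simp add: powr_power powr_realpow[symmetric] powr_powr mult.commute)
  ultimately have "real (card W) \<ge> 2 * real (b ^ m) powr t + 4"
    using card_ge \<open>P ^ m \<ge> 1\<close> by linarith
  moreover have "W \<subseteq> {..<b ^ m}" "\<forall>K\<in>W. cylinder_weight b \<gamma> m K \<le> exp (- \<beta>) ^ m"
    by (auto simp: W_def)
  ultimately show thesis
    using that m(1) by blast
qed

lemma exists_sparse_subset:
  fixes W :: "nat set"
  assumes "W \<subseteq> {..<M}"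
  obtains W' where "W' \<subseteq> W" "\<forall>K\<in>W'. K \<le> M - 2"
    "\<forall>K\<in>W'. \<forall>K'\<in>W'. K \<noteq> K' \<longrightarrow> K + 2 \<le> K' \<or> K' + 2 \<le> K" "card W \<le> 2 * card W' + 1"
proof -
  define W\<^sub>0 where "W\<^sub>0 = W - {M - 1}"
  have fin: "finite W\<^sub>0"
    using assms finite_subset by (auto simp: W\<^sub>0_def)
  have "card W \<le> card (insert (M - 1) W\<^sub>0)"
    using fin by (intro card_mono) (auto simp: W\<^sub>0_def)
  also have "\<dots> \<le> card W\<^sub>0 + 1"
    using fin by (simp add: card_insert_if)
  also have "card W\<^sub>0 = card {K \<in> W\<^sub>0. even K} + card {K \<in> W\<^sub>0. odd K}"
    using fin by (subst card_Un_disjoint[symmetric]) (auto intro: arg_cong[where f=card])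
  finally have card_W: "card W \<le> card {K \<in> W\<^sub>0. even K} + card {K \<in> W\<^sub>0. odd K} + 1" .
  have "K \<le> M - 2" if "K \<in> W\<^sub>0" for K
    using that assms by (auto simp: W\<^sub>0_def)
  moreover have "K + 2 \<le> K' \<or> K' + 2 \<le> K" if "K \<noteq> K'" "even K = even K'" for K K' :: nat
    using that by presburger
  ultimately show thesis
    using card_W that[of "{K \<in> W\<^sub>0. even K}"] that[of "{K \<in> W\<^sub>0. odd K}"]
    by (cases "card {K \<in> W\<^sub>0. odd K} \<le> card {K \<in> W\<^sub>0. even K}") (auto simp: W\<^sub>0_def)
qed

lemma hausdorff_measure_convergence_set_pos:
  assumes b: "b \<ge> 2" and pos: "\<forall>i<b. \<gamma> i > 0" and "t \<ge> 0" and "s0 \<ge> 0"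
    and min: "\<And>s. s \<ge> 0 \<Longrightarrow> ln (partition_sum \<gamma> b s0) \<le> ln (partition_sum \<gamma> b s)"
    and strict: "\<And>s. s > s0 \<Longrightarrow> ln (partition_sum \<gamma> b s0) < ln (partition_sum \<gamma> b s)"
    and below: "t * ln b < ln (partition_sum \<gamma> b s0)"
  shows "hausdorff_measure t (convergence_set b \<gamma>) \<noteq> 0"
proof -
  have b0: "b > 0" using b by simp
  obtain s \<kappa> \<mu> \<beta> A where slopes: "s \<ge> 0" "\<kappa> > 0" "\<mu> > 0" "\<beta> > 0"
    "ln (partition_sum \<gamma> b s) - ln (partition_sum \<gamma> b (s - \<kappa>)) > \<kappa> * \<beta>"
    "ln (partition_sum \<gamma> b (s + \<mu>)) - ln (partition_sum \<gamma> b s) < \<mu> * A"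
    "ln (partition_sum \<gamma> b s) - s * A > t * ln b"
    using near_minimizer_slopes[OF has_real_derivative_ln_partition_sum[OF b0]
        isCont_log_partition_deriv[OF b0] \<open>s0 \<ge> 0\<close> min strict below] by blast
  obtain m W where W: "m \<ge> 1" "W \<subseteq> {..<b ^ m}" "\<forall>K\<in>W. cylinder_weight b \<gamma> m K \<le> exp (- \<beta>) ^ m"
    "real (card W) \<ge> 2 * real (b ^ m) powr t + 4"
    using exists_light_words[OF b pos \<open>t \<ge> 0\<close> slopes] by blast
  obtain W' where W': "W' \<subseteq> W" "\<forall>K\<in>W'. K \<le> b ^ m - 2"
    "\<forall>K\<in>W'. \<forall>K'\<in>W'. K \<noteq> K' \<longrightarrow> K + 2 \<le> K' \<or> K' + 2 \<le> K" "card W \<le> 2 * card W' + 1"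
    using exists_sparse_subset[OF W(2)] by blast
  have "real (b ^ m) powr t \<ge> 1"
    using b \<open>t \<ge> 0\<close> by (simp add: ge_one_powr_ge_zero)
  then have card_W': "real (card W') \<ge> real (b ^ m) powr t + 1"
    using W(4) W'(4) by linarith
  interpret cantor_construction b \<gamma> m W' "exp (- \<beta>) ^ m" t
  proof
    show "exp (- \<beta>) ^ m < 1"
      using \<open>\<beta> > 0\<close> W(1) by (simp add: power_less_one_iff)
    show "card W' \<ge> 2"
      using card_W' \<open>real (b ^ m) powr t \<ge> 1\<close> by linarith
  qed (use b pos W W' card_W' \<open>t \<ge> 0\<close> in auto)
  show ?thesis
    by (rule hausdorff_measure_pos)
qed

lemma sum_prod_decode_le:
  fixes f :: "nat \<times> nat \<Rightarrow> real"
  assumes "\<And>p. 0 \<le> f p"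
  shows "(\<Sum>i<M. f (prod_decode i)) \<le> (\<Sum>p\<in>{..M} \<times> {..M}. f p)"
proof -
  have "inj_on prod_decode {..<M}"
    by (rule inj_on_subset[OF inj_prod_decode subset_UNIV])
  then have "(\<Sum>i<M. f (prod_decode i)) = (\<Sum>p\<in>prod_decode ` {..<M}. f p)"
    by (simp add: sum.reindex)
  also have "\<dots> \<le> (\<Sum>p\<in>{..M} \<times> {..M}. f p)"
  proof (rule sum_mono2)
    show "prod_decode ` {..<M} \<subseteq> {..M} \<times> {..M}"
    proof
      fix p assume "p \<in> prod_decode ` {..<M}"
      then obtain i where i: "i < M" "prod_decode i = p"
        by auto
      obtain n K where p: "p = (n, K)"
        by fastforce
      have "prod_encode (n, K) = i"
        using i p by (metis prod_decode_inverse)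
      then have "n \<le> i" "K \<le> i"
        using le_prod_encode_1[of n K] le_prod_encode_2[of K n] by auto
      then show "p \<in> {..M} \<times> {..M}"
        using i p by auto
    qed
  qed (use assms in auto)
  finally show ?thesis .
qed

lemma hausdorff_approx_le_pair_indexed_cover:
  fixes U :: "nat \<times> nat \<Rightarrow> real set"
  assumes cover: "A \<subseteq> (\<Union>p\<in>I. U p)"
    and small: "\<And>p. p \<in> I \<Longrightarrow> bounded (U p) \<and> diameter (U p) \<le> \<delta>" and "\<delta> \<ge> 0"
    and partial: "\<And>M. (\<Sum>p\<in>I \<inter> ({..M} \<times> {..M}). hd_term s (U p)) \<le> B"
  shows "hausdorff_approx s \<delta> A \<le> ennreal B"
proof -
  define V where "V i = (if prod_decode i \<in> I then U (prod_decode i) else {})" for i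
  define f where "f p = (if p \<in> I then hd_term s (U p) else 0)" for p
  define h where "h i = hd_term s (V i)" for i
  have h_eq: "h i = f (prod_decode i)" for i
    by (simp add: h_def V_def f_def hd_term_def)
  have h_nonneg: "0 \<le> h i" for i
    by (simp add: h_def hd_term_nonneg)
  have partial_h: "sum h {..<M} \<le> B" for M
  proof -
    have "sum h {..<M} \<le> (\<Sum>p\<in>{..M} \<times> {..M}. f p)"
      unfolding h_eq by (rule sum_prod_decode_le) (simp add: f_def hd_term_nonneg)
    also have "\<dots> = (\<Sum>p\<in>({..M} \<times> {..M}) \<inter> I. hd_term s (U p))"
      unfolding f_def by (rule sum.inter_restrict[symmetric]) simp
    also have "\<dots> = (\<Sum>p\<in>I \<inter> ({..M} \<times> {..M}). hd_term s (U p))"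
      by (simp only: Int_commute)
    finally show ?thesis
      using partial[of M] by linarith
  qed
  have summable: "summable h"
  proof (rule bounded_imp_summable[OF h_nonneg])
    show "(\<Sum>k\<le>n. h k) \<le> B" for n
      using partial_h[of "Suc n"] by (simp add: lessThan_Suc_atMost)
  qed
  have "hausdorff_approx s \<delta> A \<le> (\<Sum>i. ennreal (h i))"
    unfolding hausdorff_approx_def h_def
  proof (rule INF_lower, safe)
    fix x assume "x \<in> A"
    then obtain p where "p \<in> I" "x \<in> U p"
      using cover by blast
    then show "x \<in> (\<Union>i. V i)"
      by (auto simp: V_def intro!: exI[of _ "prod_encode p"])
  qed (use small \<open>\<delta> \<ge> 0\<close> in \<open>auto simp: V_def\<close>)
  also have "\<dots> = ennreal (suminf h)"
    by (rule suminf_ennreal2[OF h_nonneg summable])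
  also have "\<dots> \<le> ennreal B"
    using summable partial_h by (intro ennreal_leI suminf_le_const)
  finally show ?thesis .
qed

fun cylinder_interval :: "nat \<Rightarrow> nat \<times> nat \<Rightarrow> real set" where
  "cylinder_interval b (n, K) = {real K / real b ^ n .. (real K + 1) / real b ^ n}"

lemma bounded_cylinder_interval: "bounded (cylinder_interval b p)"
  by (cases p) simp

lemma diameter_cylinder_interval:
  assumes "b > 0"
  shows "diameter (cylinder_interval b (n, K)) = 1 / real b ^ n"
proof -
  have "real K / real b ^ n \<le> (real K + 1) / real b ^ n"
    using assms by (simp add: divide_right_mono)
  then show ?thesis
    by (simp add: diameter_closed_interval diff_divide_distrib[symmetric])
qed

lemma hd_term_cylinder_interval:
  assumes "b > 0" "t > 0"
  shows "hd_term t (cylinder_interval b (n, K)) = (real b powr (- t)) ^ n"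
proof -
  have "cylinder_interval b (n, K) \<noteq> {}"
    using assms by (simp add: divide_right_mono)
  then have "hd_term t (cylinder_interval b (n, K)) = (1 / real b ^ n) powr t"
    using assms by (simp add: hd_term_def diameter_cylinder_interval del: cylinder_interval.simps)
  also have "\<dots> = (real b powr (- t)) ^ n"
    using assms by (simp add: powr_divide powr_realpow[symmetric] powr_powr powr_minus_divide
        powr_power mult.commute)
  finally show ?thesis .
qed

definition light_cylinders :: "nat \<Rightarrow> (nat \<Rightarrow> real) \<Rightarrow> nat \<Rightarrow> (nat \<times> nat) set" where
  "light_cylinders b \<gamma> n0 = {(n, K). n0 \<le> n \<and> K \<le> b ^ n \<and> cylinder_weight b \<gamma> n K \<le> 1}"

lemma convergence_set_subset_cylinders:
  assumes "b > 0"
  shows "convergence_set b \<gamma> \<subseteq> (\<Union>p\<in>light_cylinders b \<gamma> n0. cylinder_interval b p)"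
proof
  fix x assume "x \<in> convergence_set b \<gamma>"
  then have x: "0 \<le> x" "x \<le> 1" and summable: "summable (\<lambda>n. \<Prod>j=1..Suc n. \<gamma> (digit b x j))"
    by (auto simp: convergence_set_def)
  from summable have "(\<lambda>n. \<Prod>j=1..Suc n. \<gamma> (digit b x j)) \<longlonglongrightarrow> 0"
    by (rule summable_LIMSEQ_zero)
  then obtain N where N: "\<And>n. n \<ge> N \<Longrightarrow> norm (\<Prod>j=1..Suc n. \<gamma> (digit b x j)) < 1"
    using LIMSEQ_D[of _ 0 1] by fastforce
  define n where "n = Suc (max N n0)"
  define K where "K = nat \<lfloor>x * real b ^ n\<rfloor>"
  have "(\<Prod>j=1..n. \<gamma> (digit b x j)) \<le> 1"
    using N[of "max N n0"] by (simp add: n_def)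
  then have weight: "cylinder_weight b \<gamma> n K \<le> 1"
    using prod_digit_eq_cylinder_weight[OF x(1) assms, of \<gamma> n] by (simp add: K_def)
  have "x * real b ^ n \<le> real b ^ n"
    using x assms by (simp add: mult_left_le_one_le)
  then have "\<lfloor>x * real b ^ n\<rfloor> \<le> int (b ^ n)"
    by (metis floor_mono floor_of_nat of_nat_power)
  then have "K \<le> b ^ n"
    unfolding K_def by (metis nat_int nat_mono of_nat_power)
  then have index: "(n, K) \<in> light_cylinders b \<gamma> n0"
    using weight by (simp add: n_def light_cylinders_def)
  have "real K \<le> x * real b ^ n" "x * real b ^ n < real K + 1"
    using x by (simp_all add: K_def)
  then have "real K / real b ^ n \<le> x" "x \<le> (real K + 1) / real b ^ n"
    using assms by (simp_all add: field_simps)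
  then have "x \<in> cylinder_interval b (n, K)"
    by simp
  with index show "x \<in> (\<Union>p\<in>light_cylinders b \<gamma> n0. cylinder_interval b p)"
    by (rule UN_I)
qed

lemma card_light_cylinders_le:
  assumes "b > 0" "\<forall>i<b. \<gamma> i > 0" "s0 \<ge> 0"
  shows "real (card {K. K \<le> b ^ n \<and> cylinder_weight b \<gamma> n K \<le> 1}) \<le> 1 + partition_sum \<gamma> b s0 ^ n"
proof -
  let ?w = "cylinder_weight b \<gamma> n"
  have "card {K. K \<le> b ^ n \<and> ?w K \<le> 1} \<le> card (insert (b ^ n) {K \<in> {..<b ^ n}. ?w K \<le> 1})"
    by (rule card_mono) auto
  also have "\<dots> \<le> Suc (card {K \<in> {..<b ^ n}. ?w K \<le> 1})"
    by (simp add: card_insert_if)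
  finally have "card {K. K \<le> b ^ n \<and> ?w K \<le> 1} \<le> Suc (card {K \<in> {..<b ^ n}. ?w K \<le> 1})" .
  moreover have "real (card {K \<in> {..<b ^ n}. ?w K \<le> 1}) = (\<Sum>K<b ^ n. if ?w K \<le> 1 then 1 else 0)"
    by (simp add: sum.inter_filter[symmetric])
  moreover have "\<dots> \<le> (\<Sum>K<b ^ n. ?w K powr (- s0))"
  proof (rule sum_mono)
    fix K
    have w: "?w K > 0"
      using assms cylinder_weight_pos[of b \<gamma>] by auto
    show "(if ?w K \<le> 1 then 1 else 0) \<le> ?w K powr (- s0)"
    proof (cases "?w K \<le> 1")
      case True
      then have "0 \<le> - s0 * ln (?w K)"
        using w assms(3) by (simp add: mult_nonneg_nonpos)
      then show ?thesis
        using True w by (simp add: powr_def)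
    qed simp
  qed
  moreover have "(\<Sum>K<b ^ n. ?w K powr (- s0)) = partition_sum \<gamma> b s0 ^ n"
    using sum_cylinder_weight_powr[OF assms(1,2), of n "- s0"] by simp
  ultimately show ?thesis
    by linarith
qed

lemma sum_power_atLeastAtMost_le:
  fixes x :: real
  assumes "0 \<le> x" "x < 1"
  shows "(\<Sum>n=n0..M. x ^ n) \<le> x ^ n0 / (1 - x)"
proof (cases "M < n0")
  case False
  have "(x ^ n0 - x ^ Suc M) / (1 - x) \<le> x ^ n0 / (1 - x)"
    using assms by (intro divide_right_mono) auto
  then show ?thesis
    using False assms by (simp add: sum_gp)
qed (use assms in simp)

lemma sum_hd_term_light_cylinders_le:
  assumes "b > 0" "\<forall>i<b. \<gamma> i > 0" "s0 \<ge> 0" "t > 0"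
  defines "\<rho> \<equiv> real b powr (- t)" and "r \<equiv> partition_sum \<gamma> b s0 * real b powr (- t)"
  assumes "\<rho> < 1" "r < 1"
  shows "(\<Sum>p\<in>light_cylinders b \<gamma> n0 \<inter> ({..M} \<times> {..M}). hd_term t (cylinder_interval b p))
    \<le> \<rho> ^ n0 / (1 - \<rho>) + r ^ n0 / (1 - r)"
proof -
  define L where "L n = {K. K \<le> b ^ n \<and> cylinder_weight b \<gamma> n K \<le> 1}" for n
  have fin_L: "finite (L n)" for n
    by (rule finite_subset[of _ "{..b ^ n}"]) (auto simp: L_def)
  have \<rho>: "0 < \<rho>" and r: "0 \<le> r"
    using partition_sum_pos[OF assms(1), of \<gamma> s0] assms(1) by (simp_all add: \<rho>_def r_def)
  have "(\<Sum>p\<in>light_cylinders b \<gamma> n0 \<inter> ({..M} \<times> {..M}). hd_term t (cylinder_interval b p))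
      = (\<Sum>(n, K)\<in>light_cylinders b \<gamma> n0 \<inter> ({..M} \<times> {..M}). \<rho> ^ n)"
    by (intro sum.cong refl) (auto simp: \<rho>_def hd_term_cylinder_interval[OF assms(1,4)]
        simp del: cylinder_interval.simps)
  also have "\<dots> \<le> (\<Sum>(n, K)\<in>(SIGMA n:{n0..M}. L n). \<rho> ^ n)"
    using \<rho> fin_L by (intro sum_mono2) (auto simp: L_def light_cylinders_def)
  also have "\<dots> = (\<Sum>n=n0..M. \<rho> ^ n * real (card (L n)))"
    by (subst sum.Sigma[symmetric]) (auto simp: fin_L mult.commute)
  also have "\<dots> \<le> (\<Sum>n=n0..M. \<rho> ^ n * (1 + partition_sum \<gamma> b s0 ^ n))"
    using card_light_cylinders_le[OF assms(1-3)] \<rho>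
    by (intro sum_mono mult_left_mono) (simp_all add: L_def)
  also have "\<dots> = (\<Sum>n=n0..M. \<rho> ^ n) + (\<Sum>n=n0..M. r ^ n)"
    by (simp add: \<rho>_def r_def sum.distrib power_mult_distrib algebra_simps)
  also have "\<dots> \<le> \<rho> ^ n0 / (1 - \<rho>) + r ^ n0 / (1 - r)"
    using \<rho> r assms(7,8) by (intro add_mono sum_power_atLeastAtMost_le) auto
  finally show ?thesis .
qed

lemma hausdorff_approx_convergence_set_le:
  assumes b: "b \<ge> 2" and pos: "\<forall>i<b. \<gamma> i > 0" and "s0 \<ge> 0" "t > 0"
    and r: "partition_sum \<gamma> b s0 * real b powr (- t) < 1" and \<delta>: "1 / real b ^ n0 \<le> \<delta>"
  defines "\<rho> \<equiv> real b powr (- t)"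
  shows "hausdorff_approx t \<delta> (convergence_set b \<gamma>)
    \<le> ennreal (\<rho> ^ n0 / (1 - \<rho>) + (partition_sum \<gamma> b s0 * \<rho>) ^ n0 / (1 - partition_sum \<gamma> b s0 * \<rho>))"
proof (rule hausdorff_approx_le_pair_indexed_cover[OF convergence_set_subset_cylinders])
  show b0: "b > 0"
    using b by simp
  show "bounded (cylinder_interval b p) \<and> diameter (cylinder_interval b p) \<le> \<delta>"
    if "p \<in> light_cylinders b \<gamma> n0" for p
  proof -
    obtain n K where p: "p = (n, K)"
      by fastforce
    then have "n0 \<le> n"
      using that by (simp add: light_cylinders_def)
    have "1 / real b ^ n \<le> 1 / real b ^ n0"
      using \<open>n0 \<le> n\<close> b by (intro divide_left_mono power_increasing) auto
    then show ?thesis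
      using \<delta> by (simp add: p bounded_cylinder_interval diameter_cylinder_interval[OF b0]
          del: cylinder_interval.simps)
  qed
  show "\<delta> \<ge> 0"
    using \<delta> by (smt (verit) divide_nonneg_nonneg zero_le_power of_nat_0_le_iff)
  have "\<rho> < 1"
    using b \<open>t > 0\<close> by (simp add: \<rho>_def powr_minus_divide gr_one_powr)
  then show "(\<Sum>p\<in>light_cylinders b \<gamma> n0 \<inter> ({..M} \<times> {..M}). hd_term t (cylinder_interval b p))
      \<le> \<rho> ^ n0 / (1 - \<rho>) + (partition_sum \<gamma> b s0 * \<rho>) ^ n0 / (1 - partition_sum \<gamma> b s0 * \<rho>)" for M
    unfolding \<rho>_def using r by (intro sum_hd_term_light_cylinders_le[OF b0 pos \<open>s0 \<ge> 0\<close> \<open>t > 0\<close>])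
qed

lemma hausdorff_measure_eq_0I:
  assumes "\<And>\<delta> e. \<delta> > 0 \<Longrightarrow> e > 0 \<Longrightarrow> hausdorff_approx t \<delta> A \<le> ennreal e"
  shows "hausdorff_measure t A = 0"
proof -
  have "hausdorff_approx t \<delta> A \<le> 0" if "\<delta> > 0" for \<delta>
  proof (rule ennreal_le_epsilon)
    show "hausdorff_approx t \<delta> A \<le> 0 + ennreal e" if "e > 0" for e :: real
      using assms[OF \<open>\<delta> > 0\<close> that] by simp
  qed
  then show ?thesis
    unfolding hausdorff_measure_def by simp
qed

lemma hausdorff_measure_convergence_set_zero:
  assumes b: "b \<ge> 2" and pos: "\<forall>i<b. \<gamma> i > 0" and "s0 \<ge> 0" "t > 0"
    and above: "ln (partition_sum \<gamma> b s0) / ln b < t"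
  shows "hausdorff_measure t (convergence_set b \<gamma>) = 0"
proof (rule hausdorff_measure_eq_0I)
  fix \<delta> e :: real assume "\<delta> > 0" "e > 0"
  have b0: "b > 0" using b by simp
  define \<rho> where "\<rho> = real b powr (- t)"
  define r where "r = partition_sum \<gamma> b s0 * \<rho>"
  have "ln (partition_sum \<gamma> b s0) < ln (real b powr t)"
    using above b by (simp add: divide_less_eq mult.commute)
  then have "partition_sum \<gamma> b s0 < real b powr t"
    using partition_sum_pos[OF b0, of \<gamma> s0] b0 by (subst (asm) ln_less_cancel_iff) auto
  then have r: "0 \<le> r" "r < 1"
    using b0 partition_sum_pos[OF b0, of \<gamma> s0] by (simp_all add: r_def \<rho>_def powr_minus_divide divide_less_eq)
  have \<rho>: "0 < \<rho>" "\<rho> < 1"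
    using b \<open>t > 0\<close> by (simp_all add: \<rho>_def powr_minus_divide gr_one_powr)
  have "(\<lambda>n. \<rho> ^ n / (1 - \<rho>) + r ^ n / (1 - r)) \<longlonglongrightarrow> 0 / (1 - \<rho>) + 0 / (1 - r)"
    using \<rho> r by (intro tendsto_intros LIMSEQ_power_zero) auto
  then have ev_bound: "\<forall>\<^sub>F n in sequentially. \<rho> ^ n / (1 - \<rho>) + r ^ n / (1 - r) < e"
    using \<open>e > 0\<close> by (intro order_tendstoD) auto
  have "(\<lambda>n. (1 / real b) ^ n) \<longlonglongrightarrow> 0"
    using b by (intro LIMSEQ_power_zero) auto
  then have ev_diam: "\<forall>\<^sub>F n in sequentially. (1 / real b) ^ n < \<delta>"
    using \<open>\<delta> > 0\<close> by (rule order_tendstoD(2))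
  obtain n0 where n0: "\<rho> ^ n0 / (1 - \<rho>) + r ^ n0 / (1 - r) < e" "(1 / real b) ^ n0 < \<delta>"
    using eventually_happens[OF eventually_conj[OF ev_bound ev_diam]] by auto
  have "1 / real b ^ n0 \<le> \<delta>"
    using n0(2) by (simp add: power_divide)
  then have "hausdorff_approx t \<delta> (convergence_set b \<gamma>) \<le> ennreal (\<rho> ^ n0 / (1 - \<rho>) + r ^ n0 / (1 - r))"
    unfolding \<rho>_def r_def
    by (rule hausdorff_approx_convergence_set_le[OF b pos \<open>s0 \<ge> 0\<close> \<open>t > 0\<close> r(2)[unfolded r_def \<rho>_def]])
  also have "\<dots> \<le> ennreal e"
    using n0(1) by (intro ennreal_leI) simp
  finally show "hausdorff_approx t \<delta> (convergence_set b \<gamma>) \<le> ennreal e" .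
qed

lemma hausdorff_dim_eqI:
  fixes A :: "real set"
  assumes "d \<ge> 0" and zero: "\<And>t. t > d \<Longrightarrow> hausdorff_measure t A = 0"
    and nonzero: "\<And>t. 0 \<le> t \<Longrightarrow> t < d \<Longrightarrow> hausdorff_measure t A \<noteq> 0"
  shows "hausdorff_dim A = d"
proof -
  let ?S = "{s. 0 \<le> s \<and> hausdorff_measure s A = 0}"
  have in_S: "d + e \<in> ?S" if "e > 0" for e
    using zero[of "d + e"] that \<open>d \<ge> 0\<close> by simp
  have lower: "d \<le> s" if "s \<in> ?S" for s
  proof (rule ccontr)
    assume "\<not> d \<le> s"
    then show False
      using that nonzero[of s] by simp
  qed
  have "d \<le> Inf ?S"
    using in_S[of 1] lower by (intro cInf_greatest) auto
  moreover have "bdd_below ?S"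
    unfolding bdd_below_def by auto
  then have "Inf ?S \<le> d + e" if "e > 0" for e
    using in_S[OF that] by (rule cInf_lower[rotated])
  then have "Inf ?S \<le> d"
    by (rule field_le_epsilon)
  ultimately show ?thesis
    by (simp add: hausdorff_dim_def)
qed

lemma hausdorff_dim_convergence_set:
  assumes b: "b \<ge> 2" and pos: "\<forall>i<b. \<gamma> i > 0" and lt: "\<exists>i<b. \<gamma> i < 1"
  obtains s0 where "s0 \<ge> 0" "\<And>s. s \<ge> 0 \<Longrightarrow> ln (partition_sum \<gamma> b s0) \<le> ln (partition_sum \<gamma> b s)"
    "hausdorff_dim (convergence_set b \<gamma>) = ln (partition_sum \<gamma> b s0) / ln b"
proof -
  obtain s0 where "s0 \<ge> 0"
    and min: "\<And>s. s \<ge> 0 \<Longrightarrow> ln (partition_sum \<gamma> b s0) \<le> ln (partition_sum \<gamma> b s)"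
    and strict: "\<And>s. s > s0 \<Longrightarrow> ln (partition_sum \<gamma> b s0) < ln (partition_sum \<gamma> b s)"
    using ln_partition_sum_largest_minimizer[OF b lt pos] by blast
  have ln_b: "ln (real b) > 0"
    using b by simp
  obtain i where "i < b" "\<gamma> i < 1"
    using lt by blast
  then have "0 \<le> - s0 * ln (\<gamma> i)"
    using pos \<open>s0 \<ge> 0\<close> by (intro mult_nonpos_nonpos) auto
  then have "ln (partition_sum \<gamma> b s0) \<ge> 0"
    using ln_partition_sum_ge[OF \<open>i < b\<close>, where \<gamma>=\<gamma> and s=s0] by linarith
  then have dim_nonneg: "ln (partition_sum \<gamma> b s0) / ln b \<ge> 0"
    using ln_b by simp
  have "hausdorff_dim (convergence_set b \<gamma>) = ln (partition_sum \<gamma> b s0) / ln b"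
  proof (rule hausdorff_dim_eqI[OF dim_nonneg])
    show "hausdorff_measure t (convergence_set b \<gamma>) = 0" if "ln (partition_sum \<gamma> b s0) / ln b < t" for t
      using dim_nonneg that by (intro hausdorff_measure_convergence_set_zero[OF b pos \<open>s0 \<ge> 0\<close>]) auto
    show "hausdorff_measure t (convergence_set b \<gamma>) \<noteq> 0"
      if "0 \<le> t" "t < ln (partition_sum \<gamma> b s0) / ln b" for t
      using that ln_b
      by (intro hausdorff_measure_convergence_set_pos[OF b pos _ \<open>s0 \<ge> 0\<close> min strict])
        (auto simp: less_divide_eq)
  qed
  with \<open>s0 \<ge> 0\<close> min show thesis
    by (rule that)
qed

theorem theorem4p5:
  fixes b :: nat and \<gamma> :: "nat \<Rightarrow> real" and X :: "real set"
  assumes hb: "b \<ge> 2"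
    and hpos: "\<forall>i<b. \<gamma> i > 0"
    and hgt: "\<exists>i<b. \<gamma> i > 1"
    and hlt: "\<exists>i<b. \<gamma> i < 1"
    and hX: "X = {x \<in> {0..1}. summable (\<lambda>n. \<Prod>j=1..Suc n. \<gamma> (digit b x j))}"
  shows "\<exists>s0\<ge>0.
           (\<forall>s\<ge>0. ln (\<Sum>i<b. \<gamma> i powr (-s0)) / ln b \<le> ln (\<Sum>i<b. \<gamma> i powr (-s)) / ln b) \<and>
           hausdorff_dim X = ln (\<Sum>i<b. \<gamma> i powr (-s0)) / ln b"
proof -
  obtain s0 where "s0 \<ge> 0"
    and min: "\<And>s. s \<ge> 0 \<Longrightarrow> ln (partition_sum \<gamma> b s0) \<le> ln (partition_sum \<gamma> b s)"
    and dim: "hausdorff_dim (convergence_set b \<gamma>) = ln (partition_sum \<gamma> b s0) / ln b"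
    using hausdorff_dim_convergence_set[OF hb hpos hlt] by blast
  have "X = convergence_set b \<gamma>"
    by (simp add: hX convergence_set_def)
  moreover have "ln (real b) > 0"
    using hb by simp
  ultimately show ?thesis
    using \<open>s0 \<ge> 0\<close> min dim partition_sum_eq_powr[OF hpos]
    by (metis divide_right_mono less_imp_le)
qed

end
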